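(* Let $R$ be an associative ring with identity and let $e_1, e_2$ be idempotents of $R$ with $e_1 \sim_o e_2$. Then there is an inner automorphism of $R$ (a map $x \mapsto wxw^{-1}$ for some unit $w \in R$) sending $e_1$ to $e_2$.
   Context: Let $\gamma(R)$ be the directed graph whose vertices are the idempotents of $R$, with an edge $f \to g$ if and only if $fg = 0$; $g$ is then called an out-neighbour of $f$. For idempotents $e, e'$, write $e \sim_o e'$ if they have the same set of out-neighbours in $\gamma(R)$, i.e. for every idempotent $f \in R$, $ef = 0 \iff e'f = 0$. *)

theory Defs
  imports Main
begin

definition idempotent :: "'a::ring_1 \<Rightarrow> bool" where
  "idempotent e \<longleftrightarrow> e * e = e"

text \<open>Out-neighbours of an idempotent f in the idempotent graph: idempotents g with f g = 0.\<close>
definition out_nbrs :: "'a::ring_1 \<Rightarrow> 'a set" where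
  "out_nbrs f = {g. idempotent g \<and> f * g = 0}"

definition sim_o :: "'a::ring_1 \<Rightarrow> 'a \<Rightarrow> bool" where
  "sim_o e e' \<longleftrightarrow> out_nbrs e = out_nbrs e'"

definition ring_unit :: "'a::ring_1 \<Rightarrow> bool" where
  "ring_unit w \<longleftrightarrow> (\<exists>v. w * v = 1 \<and> v * w = 1)"

definition ring_inv :: "'a::ring_1 \<Rightarrow> 'a" where
  "ring_inv w = (THE v. w * v = 1 \<and> v * w = 1)"

definition inner_aut :: "'a::ring_1 \<Rightarrow> 'a \<Rightarrow> 'a" where
  "inner_aut w x = w * x * ring_inv w"

end

theory Submission
  imports Defs
begin

text \<open>If \<open>e\<^sub>1 \<sim>\<^sub>o e\<^sub>2\<close>, testing with the complementary idempotents \<open>1 - e\<^sub>1\<close> and \<open>1 - e\<^sub>2\<close>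
  gives \<open>e\<^sub>2 e\<^sub>1 = e\<^sub>2\<close> and \<open>e\<^sub>1 e\<^sub>2 = e\<^sub>1\<close>. Then \<open>d = e\<^sub>2 - e\<^sub>1\<close> squares to zero, so
  \<open>w = 1 + d\<close> is a unit with inverse \<open>1 - d\<close>, and \<open>w e\<^sub>1 = e\<^sub>2 = e\<^sub>2 w\<close>.\<close>

lemma ring_inv_eqI:
  fixes w v :: "'a::ring_1"
  assumes "w * v = 1" "v * w = 1"
  shows "ring_inv w = v"
  unfolding ring_inv_def
proof (rule the_equality)
  show "w * v = 1 \<and> v * w = 1" using assms by simp
next
  fix u assume "w * u = 1 \<and> u * w = 1"
  then have "w * u = 1" by simp
  have "u = (v * w) * u" using assms by simp
  also have "\<dots> = v * (w * u)" by (simp add: mult.assoc)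
  also have "\<dots> = v" using \<open>w * u = 1\<close> by simp
  finally show "u = v" .
qed

lemma idempotent_one_minus:
  fixes e :: "'a::ring_1"
  assumes "idempotent e"
  shows "idempotent (1 - e)"
  using assms by (simp add: idempotent_def algebra_simps)

lemma one_minus_in_out_nbrs:
  fixes e :: "'a::ring_1"
  assumes "idempotent e"
  shows "1 - e \<in> out_nbrs e"
  using assms idempotent_one_minus[OF assms]
  by (simp add: out_nbrs_def idempotent_def algebra_simps)

lemma sim_o_sym:
  fixes e e' :: "'a::ring_1"
  shows "sim_o e e' \<Longrightarrow> sim_o e' e"
  by (simp add: sim_o_def)

lemma sim_o_mult_idempotent:
  fixes e e' :: "'a::ring_1"
  assumes "idempotent e" and "sim_o e e'"
  shows "e' * e = e'"
proof -
  have "1 - e \<in> out_nbrs e'"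
    using one_minus_in_out_nbrs[OF assms(1)] assms(2) by (simp add: sim_o_def)
  then have "e' * (1 - e) = 0" by (simp add: out_nbrs_def)
  then show ?thesis by (simp add: algebra_simps)
qed

lemma square_zero_unit:
  fixes d :: "'a::ring_1"
  assumes "d * d = 0"
  shows "ring_unit (1 + d)" and "ring_inv (1 + d) = 1 - d"
proof -
  have "(1 + d) * (1 - d) = 1" "(1 - d) * (1 + d) = 1"
    using assms by (simp_all add: algebra_simps)
  then show "ring_unit (1 + d)" and "ring_inv (1 + d) = 1 - d"
    unfolding ring_unit_def by (blast, rule ring_inv_eqI)
qed

lemma inner_aut_mutually_absorbing_idempotents:
  fixes e1 e2 :: "'a::ring_1"
  assumes "idempotent e1" "idempotent e2" "e1 * e2 = e1" "e2 * e1 = e2"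
  defines "w \<equiv> 1 + (e2 - e1)"
  shows "ring_unit w" and "inner_aut w e1 = e2"
proof -
  have sq: "(e2 - e1) * (e2 - e1) = 0"
    using assms(1-4) by (simp add: idempotent_def algebra_simps)
  show "ring_unit w" unfolding w_def by (rule square_zero_unit(1)[OF sq])
  have "w * e1 = e2 * w"
    using assms(1-4) by (simp add: w_def idempotent_def algebra_simps)
  then have "inner_aut w e1 = e2 * (w * (1 - (e2 - e1)))"
    by (simp add: inner_aut_def square_zero_unit(2)[OF sq] w_def mult.assoc)
  also have "w * (1 - (e2 - e1)) = 1"
    using sq by (simp add: w_def algebra_simps)
  finally show "inner_aut w e1 = e2" by simp
qed

theorem theorem5:
  fixes e1 e2 :: "'a::ring_1"
  assumes "idempotent e1" and "idempotent e2" and "sim_o e1 e2"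
  shows "\<exists>w. ring_unit w \<and> inner_aut w e1 = e2"
proof -
  have "e2 * e1 = e2" using sim_o_mult_idempotent[OF assms(1,3)] .
  moreover have "e1 * e2 = e1"
    using sim_o_mult_idempotent[OF assms(2) sim_o_sym[OF assms(3)]] .
  ultimately show ?thesis
    using inner_aut_mutually_absorbing_idempotents[OF assms(1,2)] by blast
qed

end
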